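(* Let $A$ be a commutative ring. Any intersection $\bigcap_i \mathfrak{q}_i$ of primary ideals $\mathfrak{q}_i$ of $A$ is an $(A \setminus \bigcup_i \sqrt{\mathfrak{q}_i})$-factroid of $A$. In particular, any intersection $\bigcap_i \mathfrak{p}_i$ of prime ideals $\mathfrak{p}_i$ of $A$ is an $(A\setminus \bigcup_i \mathfrak{p}_i)$-factroid of $A$.
   Context: For $T\subseteq A$, a $T$-factroid of $A$ is an additive subgroup $F$ of $A$ such that for all $a\in A$ and $t\in T$, $ta\in F$ implies $a\in F$. *)

theory Defs
  imports "HOL-Algebra.Algebra"
begin

definition radical :: "('a, 'b) ring_scheme \<Rightarrow> 'a set \<Rightarrow> 'a set" where
  "radical R q = {a \<in> carrier R. \<exists>n::nat. a [^]\<^bsub>R\<^esub> n \<in> q}"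

definition primary_ideal :: "'a set \<Rightarrow> ('a, 'b) ring_scheme \<Rightarrow> bool" where
  "primary_ideal q R \<longleftrightarrow> ideal q R \<and> q \<noteq> carrier R \<and>
     (\<forall>a\<in>carrier R. \<forall>b\<in>carrier R. a \<otimes>\<^bsub>R\<^esub> b \<in> q \<longrightarrow>
        a \<in> q \<or> (\<exists>n::nat. b [^]\<^bsub>R\<^esub> n \<in> q))"

definition factroid :: "('a, 'b) ring_scheme \<Rightarrow> 'a set \<Rightarrow> 'a set \<Rightarrow> bool" where
  "factroid R T F \<longleftrightarrow> T \<subseteq> carrier R \<and> additive_subgroup F R \<and>
     (\<forall>a\<in>carrier R. \<forall>t\<in>T. t \<otimes>\<^bsub>R\<^esub> a \<in> F \<longrightarrow> a \<in> F)"

end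

theory Submission
  imports Defs
begin

text \<open>If \<open>t a \<in> q\<close> with \<open>q\<close> primary and no power of \<open>t\<close> in \<open>q\<close>, then \<open>a \<in> q\<close>; so \<open>q\<close> is an
  \<open>(A - \<surd>q)\<close>-factroid, and likewise a prime \<open>p\<close> is an \<open>(A - p)\<close>-factroid. Factroids are
  closed under intersection, the multiplier sets being intersected too, and
  \<open>A - \<Union>\<^sub>i \<surd>q\<^sub>i\<close> is the intersection of the complements.\<close>

lemma (in ring) additive_subgroup_carrier_Int_INT:
  assumes "\<And>i. i \<in> I \<Longrightarrow> additive_subgroup (F i) R"
  shows "additive_subgroup (carrier R \<inter> (\<Inter>i\<in>I. F i)) R"
proof -
  have "subgroup (\<Inter>(insert (carrier R) (F ` I))) (add_monoid R)"
    using assms add.subgroup_self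
    by (intro add.subgroups_Inter) (auto simp: additive_subgroup_def)
  then show ?thesis
    by (simp add: additive_subgroup_def)
qed

lemma (in ring) factroid_carrier_Int_INT:
  assumes "\<And>i. i \<in> I \<Longrightarrow> factroid R (T i) (F i)"
  shows "factroid R (carrier R \<inter> (\<Inter>i\<in>I. T i)) (carrier R \<inter> (\<Inter>i\<in>I. F i))"
  using assms additive_subgroup_carrier_Int_INT[of I F]
  unfolding factroid_def by blast

lemma (in cring) primary_ideal_factroid:
  assumes "primary_ideal q R"
  shows "factroid R (carrier R - radical R q) q"
  unfolding factroid_def
proof (intro conjI ballI impI)
  show "additive_subgroup q R"
    using assms by (simp add: primary_ideal_def ideal.axioms(1))
  fix a t
  assume a: "a \<in> carrier R" and t: "t \<in> carrier R - radical R q" and "t \<otimes> a \<in> q"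
  then have "a \<otimes> t \<in> q"
    by (simp add: m_comm)
  moreover have "\<nexists>n::nat. t [^] n \<in> q"
    using t by (simp add: radical_def)
  ultimately show "a \<in> q"
    using assms a t unfolding primary_ideal_def by blast
qed auto

lemma primeideal_factroid:
  assumes "primeideal p R"
  shows "factroid R (carrier R - p) p"
  using assms primeideal.I_prime[OF assms] ideal.axioms(1)[OF primeideal.axioms(1)[OF assms]]
  unfolding factroid_def by blast

theorem proposition4p7:
  fixes R :: "('a, 'b) ring_scheme" and I :: "'i set"
  assumes "cring R"
  shows "(\<forall>q :: 'i \<Rightarrow> 'a set. (\<forall>i\<in>I. primary_ideal (q i) R) \<longrightarrow>
            factroid R (carrier R - (\<Union>i\<in>I. radical R (q i)))
                       (carrier R \<inter> (\<Inter>i\<in>I. q i)))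
       \<and> (\<forall>p :: 'i \<Rightarrow> 'a set. (\<forall>i\<in>I. primeideal (p i) R) \<longrightarrow>
            factroid R (carrier R - (\<Union>i\<in>I. p i))
                       (carrier R \<inter> (\<Inter>i\<in>I. p i)))"
proof -
  interpret cring R by fact
  have complement_Union: "carrier R - (\<Union>i\<in>I. S i) = carrier R \<inter> (\<Inter>i\<in>I. carrier R - S i)"
    for S :: "'i \<Rightarrow> 'a set"
    by blast
  show ?thesis
    unfolding complement_Union
    by (blast intro: factroid_carrier_Int_INT primary_ideal_factroid primeideal_factroid)
qed

end
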